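(* For every knot type $[K]$, $\dfrac{3+\sqrt{9+8\,c[K]}}{2}\le \mathrm{pl}[K]$, where $c[K]$ is the crossing number of $[K]$.
   Context: The crossing number $c[K]$ is the minimum number of crossings in a diagram of $[K]$. A planar stick diagram of $[K]$ is a closed polygonal curve in the plane (finitely many straight line segments, called edges, joined end to end), whose self-intersections are transverse double points in the interiors of edges, with over/under crossing information at each self-intersection, representing $[K]$. The planar stick index $\mathrm{pl}[K]$ is the smallest number of edges in any planar stick diagram of $[K]$. *)

theory Defs
  imports "HOL-Analysis.Analysis"
begin

type_synonym R2 = "real \<times> real"
type_synonym R3 = "real \<times> real \<times> real"

text \<open>Closed polygonal curve through the vertex list ps, parametrised on [0, length ps]
  (parameter interval [i, i+1] traverses the edge from ps!i to ps!((i+1) mod n)).\<close>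
definition poly_path :: "'a::real_vector list \<Rightarrow> real \<Rightarrow> 'a" where
  "poly_path ps t = (let n = length ps; i = nat \<lfloor>t\<rfloor> mod n; s = t - of_int \<lfloor>t\<rfloor>
     in (1 - s) *\<^sub>R (ps ! i) + s *\<^sub>R (ps ! ((i + 1) mod n)))"

definition polygonal_knot :: "R3 set \<Rightarrow> bool" where
  "polygonal_knot K \<longleftrightarrow> (\<exists>qs :: R3 list. length qs \<ge> 3 \<and>
      inj_on (poly_path qs) {0..<real (length qs)} \<and>
      K = poly_path qs ` {0..real (length qs)})"

definition ambient_isotopic :: "R3 set \<Rightarrow> R3 set \<Rightarrow> bool" where
  "ambient_isotopic A B \<longleftrightarrow> (\<exists>H :: real \<times> R3 \<Rightarrow> R3.
      continuous_on ({0..1} \<times> UNIV) H \<and>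
      (\<forall>t\<in>{0..1}. \<exists>g. homeomorphism UNIV UNIV (\<lambda>x. H (t, x)) g) \<and>
      (\<forall>x. H (0, x) = x) \<and> (\<lambda>x. H (1, x)) ` A = B)"

definition edge_dir :: "R2 list \<Rightarrow> nat \<Rightarrow> R2" where
  "edge_dir ps i = ps ! ((i + 1) mod length ps) - ps ! i"

definition regular_planar_polygon :: "R2 list \<Rightarrow> bool" where
  "regular_planar_polygon ps \<longleftrightarrow> (let n = length ps in
     n \<ge> 3 \<and>
     (\<forall>i<n. ps ! i \<noteq> ps ! ((i + 1) mod n)) \<and>
     (\<forall>s\<in>{0..<real n}. \<forall>t\<in>{0..<real n}. s \<noteq> t \<and> poly_path ps s = poly_path ps t \<longrightarrow>
        s \<notin> \<int> \<and> t \<notin> \<int> \<and>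
        (let a = edge_dir ps (nat \<lfloor>s\<rfloor>); b = edge_dir ps (nat \<lfloor>t\<rfloor>)
         in fst a * snd b - snd a * fst b \<noteq> 0) \<and>
        (\<forall>u\<in>{0..<real n}. poly_path ps u = poly_path ps s \<longrightarrow> u = s \<or> u = t)))"

definition crossings :: "R2 list \<Rightarrow> R2 set" where
  "crossings ps = {p. \<exists>s\<in>{0..<real (length ps)}. \<exists>t\<in>{0..<real (length ps)}.
      s \<noteq> t \<and> poly_path ps s = p \<and> poly_path ps t = p}"

text \<open>Lift of the planar curve to R^3 using a height function h; the heights at the two
  preimages of a crossing encode the over/under information.\<close>
definition lift :: "R2 list \<Rightarrow> (real \<Rightarrow> real) \<Rightarrow> real \<Rightarrow> R3" where
  "lift ps h t = (fst (poly_path ps t), snd (poly_path ps t), h t)"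

definition stick_diagram_of :: "R3 set \<Rightarrow> R2 list \<Rightarrow> (real \<Rightarrow> real) \<Rightarrow> bool" where
  "stick_diagram_of K ps h \<longleftrightarrow> (let n = real (length ps) in
     regular_planar_polygon ps \<and> continuous_on {0..n} h \<and> h 0 = h n \<and>
     inj_on (lift ps h) {0..<n} \<and> ambient_isotopic K (lift ps h ` {0..n}))"

definition crossing_number :: "R3 set \<Rightarrow> nat" where
  "crossing_number K = (LEAST c. \<exists>ps h. stick_diagram_of K ps h \<and> card (crossings ps) = c)"

definition planar_stick_index :: "R3 set \<Rightarrow> nat" where
  "planar_stick_index K = (LEAST n. \<exists>ps h. stick_diagram_of K ps h \<and> length ps = n)"

end

theory Submission
  imports Defs
begin

text \<open>
  Project a simple closed polygon along a direction \<open>(-a, -b, 1)\<close> and keep the \<open>z\<close>-coordinate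
  as height. The projection is a regular diagram unless \<open>(a, b)\<close> lies in finitely many sets,
  each a line or the image of a differentiable curve in the plane, hence negligible; and the
  shear \<open>(x, y, z) \<mapsto> (x + a z, y + b z, z)\<close>, an ambient isotopy, carries the polygon onto the
  lift of the diagram. So every polygonal knot has stick diagrams.

  In a regular diagram with \<open>n\<close> edges every crossing lies on two distinct non-adjacent edges,
  two edges meet at most once, and each crossing is counted once for each ordering of its two
  edges. Hence \<open>2 c \<le> n (n - 3)\<close>, and solving this quadratic inequality for \<open>n\<close> at a diagram
  with the fewest edges gives the bound.
\<close>

section \<open>Polygonal paths\<close>

definition edge_vec :: "'a::real_vector list \<Rightarrow> nat \<Rightarrow> 'a" where
  "edge_vec ps i = ps ! ((i + 1) mod length ps) - ps ! i"

lemma edge_dir_eq_edge_vec: "edge_dir = edge_vec"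
  by (intro ext) (simp add: edge_dir_def edge_vec_def)

lemma nat_floor_less:
  assumes "t \<in> {0..<real n}"
  shows "nat \<lfloor>t\<rfloor> < n"
  using assms by (auto simp: nat_less_iff floor_less_iff)

lemma poly_path_floor:
  assumes "ps \<noteq> []" "\<lfloor>t\<rfloor> = int k"
  shows "poly_path ps t = ps ! (k mod length ps)
    + (t - real k) *\<^sub>R (ps ! ((k mod length ps + 1) mod length ps) - ps ! (k mod length ps))"
  using assms by (simp add: poly_path_def Let_def scaleR_diff_left scaleR_diff_right algebra_simps)

lemma poly_path_edge:
  assumes "t \<in> {0..<real (length ps)}"
  shows "poly_path ps t = ps ! nat \<lfloor>t\<rfloor> + frac t *\<^sub>R edge_vec ps (nat \<lfloor>t\<rfloor>)"
  using nat_floor_less[OF assms]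
  by (simp add: poly_path_def Let_def frac_def edge_vec_def algebra_simps)

lemma poly_path_of_nat: "k < length ps \<Longrightarrow> poly_path ps (real k) = ps ! k"
  by (simp add: poly_path_def Let_def)

lemma poly_path_length: "ps \<noteq> [] \<Longrightarrow> poly_path ps (real (length ps)) = poly_path ps 0"
  by (simp add: poly_path_def Let_def)

lemma poly_path_map_linear:
  "linear f \<Longrightarrow> ps \<noteq> [] \<Longrightarrow> poly_path (map f ps) t = f (poly_path ps t)"
  by (simp add: poly_path_def Let_def linear_add linear_scale)

lemma edge_vec_map_linear:
  assumes "linear f" "i < length ps"
  shows "edge_vec (map f ps) i = f (edge_vec ps i)"
proof -
  have "(i + 1) mod length ps < length ps"
    using assms(2) by (intro mod_less_divisor) linarith
  with assms show ?thesis
    by (simp add: edge_vec_def linear_diff)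
qed

lemma continuous_on_poly_path_segment:
  fixes ps :: "'a::real_normed_vector list"
  assumes "ps \<noteq> []"
  shows "continuous_on {real k..real (Suc k)} (poly_path ps)"
proof -
  let ?n = "length ps"
  let ?g = "\<lambda>t. ps ! (k mod ?n) + (t - real k) *\<^sub>R (ps ! ((k mod ?n + 1) mod ?n) - ps ! (k mod ?n))"
  have path_eq: "poly_path ps t = ?g t" if "t \<in> {real k..real (Suc k)}" for t
  proof (cases "t = real (Suc k)")
    case True
    have "nat (1 + int k) = Suc k"
      by simp
    with True assms have "poly_path ps t = ps ! (Suc k mod ?n)"
      by (simp add: poly_path_def Let_def)
    with True show ?thesis
      by (simp add: mod_Suc_eq)
  next
    case False
    with that have "\<lfloor>t\<rfloor> = int k"
      by (intro floor_unique) auto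
    then show ?thesis
      by (rule poly_path_floor[OF assms])
  qed
  have "continuous_on {real k..real (Suc k)} ?g"
    by (intro continuous_intros)
  then show ?thesis
    by (rule continuous_on_eq) (simp add: path_eq)
qed

lemma continuous_on_poly_path:
  fixes ps :: "'a::real_normed_vector list"
  assumes "ps \<noteq> []"
  shows "continuous_on {0..real m} (poly_path ps)"
proof (induction m)
  case (Suc m)
  have "{0..real (Suc m)} = {0..real m} \<union> {real m..real (Suc m)}"
    by auto
  with Suc continuous_on_poly_path_segment[OF assms, of m] show ?case
    by (metis continuous_on_closed_Un closed_atLeastAtMost)
qed simp

lemma edge_vec_nonzero:
  assumes "inj_on (poly_path ps) {0..<real (length ps)}" "2 \<le> length ps" "i < length ps"
  shows "edge_vec ps i \<noteq> 0"
proof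
  assume "edge_vec ps i = 0"
  let ?i' = "(i + 1) mod length ps"
  have "?i' < length ps" "?i' \<noteq> i"
    using assms(2,3) by (auto simp: mod_Suc)
  moreover have "poly_path ps (real i) = poly_path ps (real ?i')"
    using \<open>edge_vec ps i = 0\<close> \<open>?i' < length ps\<close> assms(3)
    by (simp add: poly_path_of_nat edge_vec_def)
  ultimately show False
    using assms(1,3) by (auto dest: inj_onD)
qed

section \<open>Oblique projections of \<open>\<real>\<^sup>3\<close>\<close>

definition cross3 :: "R3 \<Rightarrow> R3 \<Rightarrow> R3" where
  "cross3 u w = (fst (snd u) * snd (snd w) - snd (snd u) * fst (snd w),
                 snd (snd u) * fst w - fst u * snd (snd w),
                 fst u * fst (snd w) - fst (snd u) * fst w)"

definition cross2 :: "R2 \<Rightarrow> R2 \<Rightarrow> real" where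
  "cross2 u w = fst u * snd w - snd u * fst w"

lemma cross3_eq_0_imp_parallel:
  assumes "cross3 u w = 0" "u \<noteq> 0"
  shows "\<exists>m. w = m *\<^sub>R u"
proof -
  obtain x y z where u: "u = (x, y, z)" by (cases u) auto
  obtain x' y' z' where w: "w = (x', y', z')" by (cases w) auto
  have e: "y * z' = z * y'" "z * x' = x * z'" "x * y' = y * x'"
    using assms(1) by (auto simp: u w cross3_def zero_prod_def)
  consider "x \<noteq> 0" | "y \<noteq> 0" | "z \<noteq> 0"
    using assms(2) by (auto simp: u zero_prod_def)
  then show ?thesis
  proof cases
    case 1
    with e show ?thesis by (intro exI[of _ "x' / x"]) (auto simp: u w field_simps)
  next
    case 2
    with e show ?thesis by (intro exI[of _ "y' / y"]) (auto simp: u w field_simps)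
  next
    case 3
    with e show ?thesis by (intro exI[of _ "z' / z"]) (auto simp: u w field_simps)
  qed
qed

text \<open>The planes spanned by \<open>E, A\<close> and by \<open>F, B\<close> both contain \<open>v\<close>, so the cross product of
  their normals is a multiple of \<open>v\<close>.\<close>

lemma cross3_cross3_collinear:
  assumes "A = - (l *\<^sub>R v) - t *\<^sub>R E" "B = - (l' *\<^sub>R v) - r *\<^sub>R F"
  shows "cross3 (cross3 E A) (cross3 F B) = (l * l' * (cross3 E F \<bullet> v)) *\<^sub>R v"
  using assms by (cases v; cases E; cases F) (simp add: cross3_def inner_Pair algebra_simps)

text \<open>Every non-horizontal direction of projection is \<open>proj_kernel a b\<close> for exactly one \<open>(a, b)\<close>,
  so directions are parametrised by the plane \<open>R2\<close>.\<close>

definition oblique_proj :: "real \<Rightarrow> real \<Rightarrow> R3 \<Rightarrow> R2" where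
  "oblique_proj a b p = (fst p + a * snd (snd p), fst (snd p) + b * snd (snd p))"

definition proj_kernel :: "real \<Rightarrow> real \<Rightarrow> R3" where
  "proj_kernel a b = (- a, - b, 1)"

lemma linear_oblique_proj: "linear (oblique_proj a b)"
  unfolding linear_iff oblique_proj_def by (auto simp: algebra_simps)

lemma oblique_proj_eq_0_iff:
  "oblique_proj a b d = 0 \<longleftrightarrow> d = snd (snd d) *\<^sub>R proj_kernel a b"
  by (cases d) (auto simp: oblique_proj_def proj_kernel_def zero_prod_def algebra_simps)

lemma cross2_oblique_proj:
  "cross2 (oblique_proj a b u) (oblique_proj a b w) = cross3 u w \<bullet> proj_kernel a b"
  by (simp add: cross2_def oblique_proj_def cross3_def proj_kernel_def inner_Pair algebra_simps)

section \<open>Generic projection directions\<close>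

definition collapsing_dirs :: "(real \<Rightarrow> R3) \<Rightarrow> R2 set" where
  "collapsing_dirs d = {(a, b). \<exists>\<tau>. d \<tau> \<noteq> 0 \<and> oblique_proj a b (d \<tau>) = 0}"

definition kernel_param :: "R3 \<Rightarrow> R2" where
  "kernel_param v = (- fst v / snd (snd v), - fst (snd v) / snd (snd v))"

lemma differentiable_kernel_param: "snd (snd v) \<noteq> 0 \<Longrightarrow> kernel_param differentiable at v"
  unfolding kernel_param_def
  by (intro differentiable_Pair differentiable_divide differentiable_minus
      bounded_linear_imp_differentiable bounded_linear_fst
      bounded_linear_compose[OF bounded_linear_snd bounded_linear_snd]
      bounded_linear_compose[OF bounded_linear_fst bounded_linear_snd])

lemma negligible_collapsing_dirs:
  assumes "\<And>t. d differentiable (at t)"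
  shows "negligible (collapsing_dirs d)"
proof -
  let ?S = "{\<tau>. snd (snd (d \<tau>)) \<noteq> 0}"
  have "collapsing_dirs d \<subseteq> (\<lambda>\<tau>. kernel_param (d \<tau>)) ` ?S"
  proof
    fix p assume "p \<in> collapsing_dirs d"
    then obtain a b \<tau> where p: "p = (a, b)" and "d \<tau> \<noteq> 0" "oblique_proj a b (d \<tau>) = 0"
      by (auto simp: collapsing_dirs_def)
    moreover obtain x y z where xyz: "d \<tau> = (x, y, z)"
      by (cases "d \<tau>") auto
    ultimately have "z \<noteq> 0" "x = - a * z" "y = - b * z"
      by (auto simp: oblique_proj_def zero_prod_def algebra_simps)
    then have "kernel_param (d \<tau>) = (a, b)" "snd (snd (d \<tau>)) \<noteq> 0"
      by (simp_all add: xyz kernel_param_def)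
    then show "p \<in> (\<lambda>\<tau>. kernel_param (d \<tau>)) ` ?S"
      using p by force
  qed
  moreover have "negligible ((\<lambda>\<tau>. kernel_param (d \<tau>)) ` ?S)"
  proof (rule negligible_differentiable_image_lowdim)
    show "(\<lambda>\<tau>. kernel_param (d \<tau>)) differentiable_on ?S"
      unfolding differentiable_on_def
      using differentiable_chain_within[OF differentiable_at_withinI[OF assms]
          differentiable_at_withinI[OF differentiable_kernel_param]]
      by (simp add: o_def)
  qed simp
  ultimately show ?thesis
    using negligible_subset by blast
qed

lemma collapsing_dirsI:
  "d \<tau> \<noteq> 0 \<Longrightarrow> oblique_proj a b (d \<tau>) = 0 \<Longrightarrow> (a, b) \<in> collapsing_dirs d"
  unfolding collapsing_dirs_def by blast

definition coplanar_dirs :: "R3 \<Rightarrow> R3 \<Rightarrow> R2 set" where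
  "coplanar_dirs u w = {(a, b). cross3 u w \<noteq> 0 \<and> cross3 u w \<bullet> proj_kernel a b = 0}"

lemma negligible_coplanar_dirs: "negligible (coplanar_dirs u w)"
proof (cases "cross3 u w = 0")
  case False
  define c where "c = cross3 u w"
  have "coplanar_dirs u w \<subseteq> {p. (fst c, fst (snd c)) \<bullet> p = snd (snd c)}"
    by (cases c) (auto simp: coplanar_dirs_def c_def [symmetric] proj_kernel_def algebra_simps)
  moreover have "(fst c, fst (snd c)) \<noteq> 0 \<or> snd (snd c) \<noteq> 0"
    using False by (cases c) (auto simp: c_def zero_prod_def)
  ultimately show ?thesis
    using negligible_hyperplane negligible_subset by blast
qed (simp add: coplanar_dirs_def)

text \<open>Projection along \<open>proj_kernel a b\<close> is regular for the polygon with vertices \<open>qs\<close> unless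
  a vertex is projected onto the line of an edge, the lines of two non-parallel edges are projected
  to parallel lines, or a line of projection through a point \<open>p\<close> on the line of edge \<open>i\<close> meets
  the lines of edges \<open>j\<close> and \<open>k\<close>; in the last case the planes through \<open>p\<close> containing those
  two lines intersect along the direction of projection.\<close>

definition bad_dirs :: "R3 list \<Rightarrow> R2 set" where
  "bad_dirs qs = (\<Union>i<length qs. \<Union>j<length qs.
     collapsing_dirs (\<lambda>\<tau>. qs ! i + \<tau> *\<^sub>R edge_vec qs i - qs ! j) \<union>
     coplanar_dirs (edge_vec qs i) (edge_vec qs j) \<union>
     (\<Union>k<length qs. collapsing_dirs (\<lambda>\<sigma>. let p = qs ! i + \<sigma> *\<^sub>R edge_vec qs i in
        cross3 (cross3 (edge_vec qs j) (qs ! j - p)) (cross3 (edge_vec qs k) (qs ! k - p)))))"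

lemma negligible_UN_lessThan:
  "(\<And>i. i < (n::nat) \<Longrightarrow> negligible (F i)) \<Longrightarrow> negligible (\<Union>i<n. F i)"
  by (rule negligible_Union) auto

lemma negligible_bad_dirs: "negligible (bad_dirs qs)"
  unfolding bad_dirs_def Let_def
  by (intro negligible_UN_lessThan negligible_Un negligible_collapsing_dirs negligible_coplanar_dirs)
     (simp add: cross3_def; intro derivative_intros)+

locale generic_projection =
  fixes qs :: "R3 list" and a b :: real
  assumes length_qs: "3 \<le> length qs"
    and simple: "inj_on (poly_path qs) {0..<real (length qs)}"
    and generic: "(a, b) \<notin> bad_dirs qs"
begin

abbreviation proj :: "R3 \<Rightarrow> R2" where
  "proj \<equiv> oblique_proj a b"

lemma proj_diff: "proj (x - y) = proj x - proj y"
  by (rule linear_diff[OF linear_oblique_proj])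

lemma proj_vertex_off_edge_line:
  assumes "i < length qs" "j < length qs" "qs ! i + \<tau> *\<^sub>R edge_vec qs i \<noteq> qs ! j"
  shows "proj (qs ! i + \<tau> *\<^sub>R edge_vec qs i) \<noteq> proj (qs ! j)"
proof
  assume "proj (qs ! i + \<tau> *\<^sub>R edge_vec qs i) = proj (qs ! j)"
  then have "(a, b) \<in> collapsing_dirs (\<lambda>\<tau>. qs ! i + \<tau> *\<^sub>R edge_vec qs i - qs ! j)"
    using assms(3) by (intro collapsing_dirsI[of _ \<tau>]) (simp_all add: proj_diff)
  with assms(1,2) generic show False
    unfolding bad_dirs_def by blast
qed

lemma proj_edges_not_parallel:
  assumes "i < length qs" "j < length qs" "cross3 (edge_vec qs i) (edge_vec qs j) \<noteq> 0"
  shows "cross2 (proj (edge_vec qs i)) (proj (edge_vec qs j)) \<noteq> 0"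
proof
  assume "cross2 (proj (edge_vec qs i)) (proj (edge_vec qs j)) = 0"
  with assms(3) have "(a, b) \<in> coplanar_dirs (edge_vec qs i) (edge_vec qs j)"
    by (simp add: coplanar_dirs_def cross2_oblique_proj)
  with assms(1,2) generic show False
    unfolding bad_dirs_def by blast
qed

lemma proj_no_common_line:
  assumes "i < length qs" "j < length qs" "k < length qs"
    and "p = qs ! i + \<sigma> *\<^sub>R edge_vec qs i"
    and "cross3 (cross3 (edge_vec qs j) (qs ! j - p)) (cross3 (edge_vec qs k) (qs ! k - p)) \<noteq> 0"
  shows "proj (cross3 (cross3 (edge_vec qs j) (qs ! j - p)) (cross3 (edge_vec qs k) (qs ! k - p))) \<noteq> 0"
proof
  assume "proj (cross3 (cross3 (edge_vec qs j) (qs ! j - p)) (cross3 (edge_vec qs k) (qs ! k - p))) = 0"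
  with assms(4,5) have "(a, b) \<in> collapsing_dirs (\<lambda>\<sigma>. let p = qs ! i + \<sigma> *\<^sub>R edge_vec qs i in
      cross3 (cross3 (edge_vec qs j) (qs ! j - p)) (cross3 (edge_vec qs k) (qs ! k - p)))"
    by (intro collapsing_dirsI[of _ \<sigma>]) (simp_all add: Let_def)
  with assms(1-3) generic show False
    unfolding bad_dirs_def by blast
qed

lemma proj_double_point_not_vertex:
  assumes s: "s \<in> {0..<real (length qs)}" and t: "t \<in> {0..<real (length qs)}"
    and "s \<noteq> t" and proj_eq: "proj (poly_path qs s) = proj (poly_path qs t)"
  shows "t \<notin> \<int>"
proof
  assume "t \<in> \<int>"
  let ?i = "nat \<lfloor>s\<rfloor>" and ?j = "nat \<lfloor>t\<rfloor>"
  have "poly_path qs t = qs ! ?j"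
    using \<open>t \<in> \<int>\<close> poly_path_edge[OF t] by simp
  moreover have "poly_path qs s \<noteq> poly_path qs t"
    using simple s t \<open>s \<noteq> t\<close> by (auto dest: inj_onD)
  ultimately show False
    using proj_vertex_off_edge_line[of ?i ?j "frac s"] proj_eq poly_path_edge[OF s]
      nat_floor_less[OF s] nat_floor_less[OF t] by simp
qed

lemma proj_double_point_transversal:
  assumes s: "s \<in> {0..<real (length qs)}" and t: "t \<in> {0..<real (length qs)}"
    and "s \<noteq> t" and proj_eq: "proj (poly_path qs s) = proj (poly_path qs t)"
  shows "cross2 (proj (edge_vec qs (nat \<lfloor>s\<rfloor>))) (proj (edge_vec qs (nat \<lfloor>t\<rfloor>))) \<noteq> 0"
proof
  let ?i = "nat \<lfloor>s\<rfloor>" and ?j = "nat \<lfloor>t\<rfloor>"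
  have i: "?i < length qs" and j: "?j < length qs"
    using nat_floor_less s t by blast+
  assume parallel: "cross2 (proj (edge_vec qs ?i)) (proj (edge_vec qs ?j)) = 0"
  then have "cross3 (edge_vec qs ?i) (edge_vec qs ?j) = 0"
    using proj_edges_not_parallel[OF i j] by blast
  moreover have "edge_vec qs ?i \<noteq> 0"
    using edge_vec_nonzero[OF simple _ i] length_qs by simp
  ultimately obtain m where m: "edge_vec qs ?j = m *\<^sub>R edge_vec qs ?i"
    using cross3_eq_0_imp_parallel by blast
  have "poly_path qs s \<noteq> poly_path qs t"
    using simple s t \<open>s \<noteq> t\<close> by (auto dest: inj_onD)
  moreover have "poly_path qs s - poly_path qs t
      = qs ! ?i + (frac s - frac t * m) *\<^sub>R edge_vec qs ?i - qs ! ?j"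
    using poly_path_edge[OF s] poly_path_edge[OF t] m by (simp add: algebra_simps)
  ultimately show False
    using proj_vertex_off_edge_line[OF i j, of "frac s - frac t * m"] proj_eq
    by (metis eq_iff_diff_eq_0 proj_diff)
qed

lemma proj_double_point_kernel:
  assumes "s \<in> {0..<real (length qs)}" "t \<in> {0..<real (length qs)}" "s \<noteq> t"
    and "proj (poly_path qs s) = proj (poly_path qs t)"
  obtains l where "l \<noteq> 0" "poly_path qs s - poly_path qs t = l *\<^sub>R proj_kernel a b"
proof -
  let ?D = "poly_path qs s - poly_path qs t"
  have "proj ?D = 0"
    using assms(4) by (simp add: proj_diff)
  then have D: "?D = snd (snd ?D) *\<^sub>R proj_kernel a b"
    by (simp only: oblique_proj_eq_0_iff)
  have "?D \<noteq> 0"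
    using simple assms(1-3) by (auto dest: inj_onD)
  with D have "snd (snd ?D) \<noteq> 0"
    by (metis scale_zero_left)
  from this D show ?thesis
    by (rule that)
qed

lemma proj_no_triple_point:
  assumes s: "s \<in> {0..<real (length qs)}" and t: "t \<in> {0..<real (length qs)}"
    and u: "u \<in> {0..<real (length qs)}" and "s \<noteq> t" "s \<noteq> u" "t \<noteq> u"
    and st: "proj (poly_path qs s) = proj (poly_path qs t)"
    and su: "proj (poly_path qs s) = proj (poly_path qs u)"
  shows False
proof -
  let ?i = "nat \<lfloor>s\<rfloor>" and ?j = "nat \<lfloor>t\<rfloor>" and ?k = "nat \<lfloor>u\<rfloor>"
  let ?v = "proj_kernel a b" and ?p = "poly_path qs s"
  obtain l where l: "l \<noteq> 0" "?p - poly_path qs t = l *\<^sub>R ?v"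
    using proj_double_point_kernel[OF s t \<open>s \<noteq> t\<close> st] .
  obtain l' where l': "l' \<noteq> 0" "?p - poly_path qs u = l' *\<^sub>R ?v"
    using proj_double_point_kernel[OF s u \<open>s \<noteq> u\<close> su] .
  have "qs ! ?j - ?p = - (l *\<^sub>R ?v) - frac t *\<^sub>R edge_vec qs ?j"
    using l(2) poly_path_edge[OF t] by (simp add: algebra_simps)
  moreover have "qs ! ?k - ?p = - (l' *\<^sub>R ?v) - frac u *\<^sub>R edge_vec qs ?k"
    using l'(2) poly_path_edge[OF u] by (simp add: algebra_simps)
  ultimately have W: "cross3 (cross3 (edge_vec qs ?j) (qs ! ?j - ?p))
      (cross3 (edge_vec qs ?k) (qs ! ?k - ?p))
      = (l * l' * cross2 (proj (edge_vec qs ?j)) (proj (edge_vec qs ?k))) *\<^sub>R ?v"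
    unfolding cross2_oblique_proj by (rule cross3_cross3_collinear)
  have "cross2 (proj (edge_vec qs ?j)) (proj (edge_vec qs ?k)) \<noteq> 0"
    using proj_double_point_transversal[OF t u \<open>t \<noteq> u\<close>] st su by simp
  with l l' have "(l * l' * cross2 (proj (edge_vec qs ?j)) (proj (edge_vec qs ?k))) *\<^sub>R ?v \<noteq> 0"
    by (simp add: proj_kernel_def zero_prod_def)
  moreover have "proj ((l * l' * cross2 (proj (edge_vec qs ?j)) (proj (edge_vec qs ?k))) *\<^sub>R ?v) = 0"
    by (simp add: oblique_proj_eq_0_iff proj_kernel_def)
  ultimately show False
    using proj_no_common_line[OF nat_floor_less[OF s] nat_floor_less[OF t] nat_floor_less[OF u]
        poly_path_edge[OF s]] W by simp
qed

lemma regular_projection: "regular_planar_polygon (map proj qs)"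
proof -
  let ?ps = "map proj qs" and ?I = "{0..<real (length qs)}"
  have path: "poly_path ?ps t = proj (poly_path qs t)" for t
    using length_qs by (intro poly_path_map_linear linear_oblique_proj) auto
  have edge: "edge_dir ?ps i = proj (edge_vec qs i)" if "i < length qs" for i
    using that by (simp add: edge_dir_eq_edge_vec edge_vec_map_linear linear_oblique_proj)
  have "?ps ! i \<noteq> ?ps ! ((i + 1) mod length qs)" if i: "i < length qs" for i
  proof -
    have "qs ! i + 1 *\<^sub>R edge_vec qs i \<noteq> qs ! i"
      using edge_vec_nonzero[OF simple _ i] length_qs by simp
    then have "proj (qs ! i + 1 *\<^sub>R edge_vec qs i) \<noteq> proj (qs ! i)"
      by (rule proj_vertex_off_edge_line[OF i i])
    moreover have "(i + 1) mod length qs < length qs"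
      using i by (intro mod_less_divisor) linarith
    ultimately show ?thesis
      using i by (simp add: edge_vec_def)
  qed
  moreover have "s \<notin> \<int> \<and> t \<notin> \<int> \<and> cross2 (edge_dir ?ps (nat \<lfloor>s\<rfloor>)) (edge_dir ?ps (nat \<lfloor>t\<rfloor>)) \<noteq> 0 \<and>
      (\<forall>u\<in>?I. poly_path ?ps u = poly_path ?ps s \<longrightarrow> u = s \<or> u = t)"
    if s: "s \<in> ?I" and t: "t \<in> ?I" and "s \<noteq> t" and "poly_path ?ps s = poly_path ?ps t" for s t
  proof -
    have st: "proj (poly_path qs s) = proj (poly_path qs t)"
      using that(4) by (simp add: path)
    have "u = s \<or> u = t" if u: "u \<in> ?I" and "poly_path ?ps u = poly_path ?ps s" for u
    proof (rule ccontr)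
      assume "\<not> (u = s \<or> u = t)"
      then show False
        using proj_no_triple_point[OF s t u \<open>s \<noteq> t\<close> _ _ st] that(2) by (auto simp: path)
    qed
    then show ?thesis
      using proj_double_point_not_vertex[OF s t \<open>s \<noteq> t\<close> st]
        proj_double_point_not_vertex[OF t s \<open>s \<noteq> t\<close>[symmetric] st[symmetric]]
        proj_double_point_transversal[OF s t \<open>s \<noteq> t\<close> st]
        edge[OF nat_floor_less[OF s]] edge[OF nat_floor_less[OF t]]
      by simp
  qed
  ultimately show ?thesis
    using length_qs by (simp add: regular_planar_polygon_def cross2_def Let_def)
qed

end

section \<open>Stick diagrams of polygonal knots\<close>

definition shear :: "real \<Rightarrow> real \<Rightarrow> R3 \<Rightarrow> R3" where
  "shear a b p = (fst p + a * snd (snd p), fst (snd p) + b * snd (snd p), snd (snd p))"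

lemma shear_inverse [simp]: "shear (- a) (- b) (shear a b p) = p"
  by (cases p) (simp add: shear_def algebra_simps)

lemma continuous_on_shear: "continuous_on S (shear a b)"
  unfolding shear_def by (intro continuous_intros)

lemma ambient_isotopic_shear: "ambient_isotopic A (shear a b ` A)"
proof -
  define H where "H = (\<lambda>(t, p). shear (t * a) (t * b) p)"
  have "continuous_on ({0..1} \<times> UNIV) H"
    unfolding H_def shear_def case_prod_beta by (intro continuous_intros)
  moreover have "homeomorphism UNIV UNIV (\<lambda>p. H (t, p)) (shear (- (t * a)) (- (t * b)))" for t
    using shear_inverse[of "- (t * a)" "- (t * b)"]
    by (intro homeomorphismI) (auto simp: H_def continuous_on_shear)
  moreover have "H (0, p) = p" for p
    by (cases p) (simp add: H_def shear_def)
  moreover have "(\<lambda>p. H (1, p)) ` A = shear a b ` A"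
    by (simp add: H_def)
  ultimately show ?thesis
    unfolding ambient_isotopic_def by blast
qed

lemma polygonal_knot_has_stick_diagram:
  assumes "polygonal_knot K"
  shows "\<exists>ps h. stick_diagram_of K ps h"
proof -
  obtain qs :: "R3 list" where length_qs: "3 \<le> length qs"
    and simple: "inj_on (poly_path qs) {0..<real (length qs)}"
    and K: "K = poly_path qs ` {0..real (length qs)}"
    using assms unfolding polygonal_knot_def by blast
  have "bad_dirs qs \<noteq> UNIV"
    using negligible_bad_dirs[of qs] by auto
  then obtain a b where "(a, b) \<notin> bad_dirs qs"
    by auto
  then interpret generic_projection qs a b
    using length_qs simple by unfold_locales
  define h where "h t = snd (snd (poly_path qs t))" for t
  have qs_ne: "qs \<noteq> []"
    using length_qs by auto
  have lift: "lift (map proj qs) h t = shear a b (poly_path qs t)" for t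
    using poly_path_map_linear[OF linear_oblique_proj qs_ne]
    by (simp add: lift_def h_def oblique_proj_def shear_def)
  have "inj_on (lift (map proj qs) h) {0..<real (length qs)}"
    using simple unfolding lift inj_on_def by (metis shear_inverse)
  moreover have "lift (map proj qs) h ` {0..real (length qs)} = shear a b ` K"
    unfolding lift K by (simp add: image_image)
  moreover have "continuous_on {0..real (length qs)} h"
    unfolding h_def by (intro continuous_on_snd continuous_on_poly_path[OF qs_ne])
  ultimately have "stick_diagram_of K (map proj qs) h"
    using regular_projection poly_path_length[OF qs_ne] ambient_isotopic_shear
    by (simp add: stick_diagram_of_def h_def)
  then show ?thesis
    by blast
qed

section \<open>Counting crossings\<close>

lemma lines_meet_once:
  fixes A B u w :: R2
  assumes "cross2 u w \<noteq> 0" "A + \<sigma> *\<^sub>R u = B + \<tau> *\<^sub>R w" "A + \<sigma>' *\<^sub>R u = B + \<tau>' *\<^sub>R w"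
  shows "\<sigma> = \<sigma>'"
proof -
  have "(A + \<sigma> *\<^sub>R u) - (A + \<sigma>' *\<^sub>R u) = (B + \<tau> *\<^sub>R w) - (B + \<tau>' *\<^sub>R w)"
    using assms(2,3) by simp
  then have "(\<sigma> - \<sigma>') *\<^sub>R u = (\<tau> - \<tau>') *\<^sub>R w"
    by (simp add: scaleR_diff_left)
  then have "cross2 ((\<sigma> - \<sigma>') *\<^sub>R u) w = cross2 ((\<tau> - \<tau>') *\<^sub>R w) w"
    by simp
  then have "(\<sigma> - \<sigma>') * cross2 u w = 0"
    by (simp add: cross2_def algebra_simps)
  with assms(1) show ?thesis
    by simp
qed

definition double_points :: "R2 list \<Rightarrow> (real \<times> real) set" where
  "double_points ps = {(s, t). s \<in> {0..<real (length ps)} \<and> t \<in> {0..<real (length ps)} \<and>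
     s \<noteq> t \<and> poly_path ps s = poly_path ps t}"

definition nonadjacent_pairs :: "nat \<Rightarrow> (nat \<times> nat) set" where
  "nonadjacent_pairs n = {(i, j). i < n \<and> j < n \<and> i \<noteq> j \<and> j \<noteq> (i + 1) mod n \<and> i \<noteq> (j + 1) mod n}"

lemma regular_planar_polygon_length: "regular_planar_polygon ps \<Longrightarrow> 3 \<le> length ps"
  by (simp add: regular_planar_polygon_def Let_def)

lemma double_points_swap: "(s, t) \<in> double_points ps \<Longrightarrow> (t, s) \<in> double_points ps"
  by (auto simp: double_points_def)

lemma regular_double_point_transversal:
  assumes "regular_planar_polygon ps" "(s, t) \<in> double_points ps"
  shows "cross2 (edge_vec ps (nat \<lfloor>s\<rfloor>)) (edge_vec ps (nat \<lfloor>t\<rfloor>)) \<noteq> 0"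
  using assms
  by (auto simp: regular_planar_polygon_def double_points_def cross2_def edge_dir_eq_edge_vec Let_def)

lemma double_point_edge_eq:
  assumes "(s, t) \<in> double_points ps"
  shows "ps ! nat \<lfloor>s\<rfloor> + frac s *\<^sub>R edge_vec ps (nat \<lfloor>s\<rfloor>)
    = ps ! nat \<lfloor>t\<rfloor> + frac t *\<^sub>R edge_vec ps (nat \<lfloor>t\<rfloor>)"
  using assms poly_path_edge[of s ps] poly_path_edge[of t ps] by (auto simp: double_points_def)

lemma double_point_not_next_edge:
  assumes reg: "regular_planar_polygon ps" and st: "(s, t) \<in> double_points ps"
  shows "nat \<lfloor>t\<rfloor> \<noteq> (nat \<lfloor>s\<rfloor> + 1) mod length ps"
proof
  let ?i = "nat \<lfloor>s\<rfloor>" and ?j = "nat \<lfloor>t\<rfloor>"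
  assume "?j = (?i + 1) mod length ps"
  then have "ps ! ?i + 1 *\<^sub>R edge_vec ps ?i = ps ! ?j + 0 *\<^sub>R edge_vec ps ?j"
    by (simp add: edge_vec_def)
  then have "frac s = 1"
    using lines_meet_once[OF regular_double_point_transversal[OF reg st] double_point_edge_eq[OF st]]
    by blast
  then show False
    using frac_lt_1[of s] by simp
qed

lemma double_point_edges_nonadjacent:
  assumes reg: "regular_planar_polygon ps" and st: "(s, t) \<in> double_points ps"
  shows "(nat \<lfloor>s\<rfloor>, nat \<lfloor>t\<rfloor>) \<in> nonadjacent_pairs (length ps)"
proof -
  have "nat \<lfloor>s\<rfloor> \<noteq> nat \<lfloor>t\<rfloor>"
    using regular_double_point_transversal[OF reg st] by (auto simp: cross2_def)
  with st double_point_not_next_edge[OF reg st]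
    double_point_not_next_edge[OF reg double_points_swap[OF st]]
  show ?thesis
    by (auto simp: nonadjacent_pairs_def double_points_def intro: nat_floor_less)
qed

lemma nonneg_eq_nat_floor_plus_frac: "0 \<le> s \<Longrightarrow> s = real (nat \<lfloor>s\<rfloor>) + frac s"
  by (simp add: frac_def)

lemma inj_on_double_point_edges:
  assumes reg: "regular_planar_polygon ps"
  shows "inj_on (\<lambda>(s, t). (nat \<lfloor>s\<rfloor>, nat \<lfloor>t\<rfloor>)) (double_points ps)"
proof (rule inj_onI, clarify)
  fix s t s' t'
  assume st: "(s, t) \<in> double_points ps" and st': "(s', t') \<in> double_points ps"
    and i: "nat \<lfloor>s\<rfloor> = nat \<lfloor>s'\<rfloor>" and j: "nat \<lfloor>t\<rfloor> = nat \<lfloor>t'\<rfloor>"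
  have "frac s = frac s'"
    using lines_meet_once[OF regular_double_point_transversal[OF reg st] double_point_edge_eq[OF st]]
      double_point_edge_eq[OF st'] i j by simp
  moreover have "frac t = frac t'"
    using lines_meet_once[OF regular_double_point_transversal[OF reg double_points_swap[OF st]]
        double_point_edge_eq[OF double_points_swap[OF st]]]
      double_point_edge_eq[OF double_points_swap[OF st']] i j by simp
  moreover have "0 \<le> s" "0 \<le> s'" "0 \<le> t" "0 \<le> t'"
    using st st' by (auto simp: double_points_def)
  ultimately show "s = s' \<and> t = t'"
    using nonneg_eq_nat_floor_plus_frac arg_cong[OF i, of real] arg_cong[OF j, of real]
    by (metis (no_types))
qed

lemma card_nonadjacent_pairs:
  assumes "3 \<le> n"
  shows "card (nonadjacent_pairs n) \<le> n * (n - 3)"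
proof -
  define prev where "prev i = (if i = 0 then n - 1 else i - 1)" for i
  define J where "J i = {..<n} - {i, (i + 1) mod n, prev i}" for i
  have card_J: "card (J i) = n - 3" if "i < n" for i
  proof -
    have "card {i, (i + 1) mod n, prev i} = 3"
      using that assms by (auto simp: prev_def mod_Suc)
    moreover have "{i, (i + 1) mod n, prev i} \<subseteq> {..<n}"
      using that by (auto simp: prev_def)
    ultimately show ?thesis
      by (simp add: J_def card_Diff_subset)
  qed
  have "nonadjacent_pairs n \<subseteq> Sigma {..<n} J"
    using assms by (auto simp: nonadjacent_pairs_def J_def prev_def mod_Suc split: if_splits)
  moreover have "card (Sigma {..<n} J) = (\<Sum>i<n. card (J i))"
    by (rule card_SigmaI) (auto simp: J_def)
  moreover have "(\<Sum>i<n. card (J i)) = n * (n - 3)"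
    by (simp add: card_J)
  moreover have "finite (Sigma {..<n} J)"
    by (auto simp: J_def)
  ultimately show ?thesis
    by (metis card_mono)
qed

lemma card_crossings_le_double_points:
  assumes "finite (double_points ps)"
  shows "2 * card (crossings ps) \<le> card (double_points ps)"
proof -
  define L where "L = {(s, t) \<in> double_points ps. s < t}"
  have "finite L"
    by (rule finite_subset[OF _ assms]) (auto simp: L_def)
  have "crossings ps \<subseteq> (\<lambda>(s, t). poly_path ps s) ` L"
  proof
    fix p assume "p \<in> crossings ps"
    then obtain s t where st: "(s, t) \<in> double_points ps" and p: "poly_path ps s = p"
      unfolding crossings_def double_points_def by blast
    show "p \<in> (\<lambda>(s, t). poly_path ps s) ` L"
    proof (cases "s < t")
      case True
      with st p show ?thesis
        by (intro image_eqI[of _ _ "(s, t)"]) (auto simp: L_def)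
    next
      case False
      with st p have "t < s" "poly_path ps t = p"
        by (auto simp: double_points_def)
      with double_points_swap[OF st] show ?thesis
        by (intro image_eqI[of _ _ "(t, s)"]) (auto simp: L_def)
    qed
  qed
  then have "card (crossings ps) \<le> card L"
    using \<open>finite L\<close> by (meson card_image_le card_mono finite_imageI order_trans)
  moreover have "double_points ps = L \<union> prod.swap ` L"
    by (auto simp: L_def double_points_def image_iff)
  moreover have "L \<inter> prod.swap ` L = {}"
    by (auto simp: L_def)
  moreover have "card (prod.swap ` L) = card L"
    by (simp add: card_image)
  ultimately show ?thesis
    using \<open>finite L\<close> by (simp add: card_Un_disjoint)
qed

lemma crossings_bound:
  assumes reg: "regular_planar_polygon ps"
  shows "2 * card (crossings ps) \<le> length ps * (length ps - 3)"
proof -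
  let ?edges = "\<lambda>(s, t). (nat \<lfloor>s\<rfloor>, nat \<lfloor>t\<rfloor>)"
  have "?edges ` double_points ps \<subseteq> nonadjacent_pairs (length ps)"
    using double_point_edges_nonadjacent[OF reg] by auto
  moreover have "finite (nonadjacent_pairs (length ps))"
    by (rule finite_subset[of _ "{..<length ps} \<times> {..<length ps}"]) (auto simp: nonadjacent_pairs_def)
  ultimately have "finite (double_points ps)"
    "card (double_points ps) \<le> card (nonadjacent_pairs (length ps))"
    using inj_on_double_point_edges[OF reg]
    by (metis finite_imageD finite_subset, metis card_inj_on_le)
  then show ?thesis
    using card_crossings_le_double_points card_nonadjacent_pairs regular_planar_polygon_length[OF reg]
    by (meson le_trans)
qed

lemma quadratic_root_bound:
  fixes c n :: nat
  assumes "2 * c \<le> n * (n - 3)" "3 \<le> n"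
  shows "(3 + sqrt (9 + 8 * real c)) / 2 \<le> real n"
proof -
  have "2 * real c \<le> real n * (real n - 3)"
    using assms by (metis of_nat_diff of_nat_le_iff of_nat_mult of_nat_numeral)
  then have "9 + 8 * real c \<le> (2 * real n - 3)\<^sup>2"
    by (simp add: power2_eq_square algebra_simps)
  then have "sqrt (9 + 8 * real c) \<le> 2 * real n - 3"
    using assms(2) by (intro real_le_lsqrt) simp_all
  then show ?thesis
    by simp
qed

theorem theorem2p2:
  fixes K :: "R3 set"
  assumes "polygonal_knot K"
  shows "(3 + sqrt (9 + 8 * real (crossing_number K))) / 2 \<le> real (planar_stick_index K)"
proof -
  obtain ps h where diagram: "stick_diagram_of K ps h" and "length ps = planar_stick_index K"
    using LeastI_ex[of "\<lambda>n. \<exists>ps h. stick_diagram_of K ps h \<and> length ps = n"]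
      polygonal_knot_has_stick_diagram[OF assms]
    unfolding planar_stick_index_def by blast
  moreover have reg: "regular_planar_polygon ps"
    using diagram by (simp add: stick_diagram_of_def Let_def)
  moreover have "crossing_number K \<le> card (crossings ps)"
    unfolding crossing_number_def by (rule Least_le) (use diagram in blast)
  ultimately show ?thesis
    using crossings_bound[OF reg] regular_planar_polygon_length[OF reg]
    by (intro quadratic_root_bound) auto
qed

end
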